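(* Assume the standing setting below. Let $\psi:(0,\infty)\to(0,\infty)$ be nonincreasing, bounded, and slowly varying (for each $K>0$ there are constants $0<c_K\le C_K$ with $c_K\psi(q)\le\psi(Kq)\le C_K\psi(q)$ for all $q$). Put $\Psi(t):=-\log\psi(e^t)$. Then a point $x=\pi(\omega)\in J$ is badly symbolically approximable with respect to $\psi$ if and only if there exists $K<\infty$ such that for every $\ell\in\mathbb{N}$ and every finite word $\eta$ of length $r$ which occurs at two distinct positions (possibly overlapping) in the initial segment $\omega_1^\ell=(\omega_1,\dots,\omega_\ell)$, we have \[ \ell_{\mathrm p}(\eta)\le K+\Psi\big(\ell_{\mathrm p}(\omega_1^{\ell-r})\big). \]
   Context: Standing setting: $(u_a)_{a\in E}$ is a rational IFS on $\mathbb{R}$, $u_a(x)=\frac{p_a}{q_a}x+\frac{r_a}{q_a}$ with $p_a\in\{\pm1\}$, $r_a\in\mathbb{Z}$, $q_a\in\mathbb{N}$, $q_a\ge2$, satisfying the strong separation condition: there is a closed interval $I$ such that the sets $u_a(I)$, $a\in E$, are pairwise disjoint subsets of $I$. $\pi(\omega)=\lim_n u_{\omega_1}\circ\cdots\circ u_{\omega_n}(0)$ is the coding map (a bijection onto the limit set $J$), and every rational in $J$ has an eventually periodic coding. Intrinsic denominator: for $p/q\in\mathbb{Q}\cap J$ with coding $\omega$, let $n\ge0$ be minimal such that $(\omega_{i})_{i>n}$ is periodic and $m\ge1$ its minimal period; set $q_{(1)}=\prod_{i=1}^n q_{\omega_i}$, $q_{(2)}=\prod_{i=1}^m q_{\omega_{n+i}}$,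 $p_{(2)}=\prod_{i=1}^m p_{\omega_{n+i}}$, and $q_{\mathrm{int}}:=q_{(1)}(q_{(2)}-p_{(2)})$. A point $x\in J$ is badly symbolically approximable w.r.t. $\psi$ if there is $\varepsilon>0$ such that $|x-p/q|\ge\varepsilon\psi(q_{\mathrm{int}})/q_{\mathrm{int}}$ for all $p/q\in\mathbb{Q}\cap J$; otherwise symbolically well approximable. The pseudolength of a finite word $\eta=(\eta_1,\dots,\eta_r)$ is $\ell_{\mathrm p}(\eta)=\sum_{i=1}^r\log q_{\eta_i}$. *)

theory Defs
  imports Complex_Main
begin

text \<open>Rational IFS: u_a(x) = (p_a/q_a) x + r_a/q_a. Words are sequences
  indexed from 0 (omega 0 is the paper's omega_1).\<close>

definition ifs_map :: "('a \<Rightarrow> int) \<Rightarrow> ('a \<Rightarrow> nat) \<Rightarrow> ('a \<Rightarrow> int) \<Rightarrow> 'a \<Rightarrow> real \<Rightarrow> real" where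
  "ifs_map p q r a x = (of_int (p a) / of_nat (q a)) * x + of_int (r a) / of_nat (q a)"

definition rational_IFS :: "'a set \<Rightarrow> ('a \<Rightarrow> int) \<Rightarrow> ('a \<Rightarrow> nat) \<Rightarrow> ('a \<Rightarrow> int) \<Rightarrow> bool" where
  "rational_IFS E p q r \<longleftrightarrow> finite E \<and> E \<noteq> {} \<and>
     (\<forall>a\<in>E. (p a = 1 \<or> p a = -1) \<and> q a \<ge> 2)"

definition strong_separation :: "'a set \<Rightarrow> ('a \<Rightarrow> real \<Rightarrow> real) \<Rightarrow> bool" where
  "strong_separation E u \<longleftrightarrow> (\<exists>lo hi. lo \<le> hi \<and>
     (\<forall>a\<in>E. u a ` {lo..hi} \<subseteq> {lo..hi}) \<and>
     (\<forall>a\<in>E. \<forall>b\<in>E. a \<noteq> b \<longrightarrow> u a ` {lo..hi} \<inter> u b ` {lo..hi} = {}))"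

fun word_comp :: "('a \<Rightarrow> real \<Rightarrow> real) \<Rightarrow> (nat \<Rightarrow> 'a) \<Rightarrow> nat \<Rightarrow> real \<Rightarrow> real" where
  "word_comp u \<omega> 0 x = x"
| "word_comp u \<omega> (Suc n) x = word_comp u \<omega> n (u (\<omega> n) x)"

definition coding_map :: "('a \<Rightarrow> real \<Rightarrow> real) \<Rightarrow> (nat \<Rightarrow> 'a) \<Rightarrow> real" where
  "coding_map u \<omega> = lim (\<lambda>n. word_comp u \<omega> n 0)"

definition words :: "'a set \<Rightarrow> (nat \<Rightarrow> 'a) set" where
  "words E = {\<omega>. \<forall>i. \<omega> i \<in> E}"

definition limit_set :: "'a set \<Rightarrow> ('a \<Rightarrow> real \<Rightarrow> real) \<Rightarrow> real set" where
  "limit_set E u = coding_map u ` words E"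

definition preperiod :: "(nat \<Rightarrow> 'a) \<Rightarrow> nat" where
  "preperiod \<omega> = (LEAST n. \<exists>m>0. \<forall>i\<ge>n. \<omega> (i + m) = \<omega> i)"

definition min_period :: "(nat \<Rightarrow> 'a) \<Rightarrow> nat" where
  "min_period \<omega> = (LEAST m. m > 0 \<and> (\<forall>i\<ge>preperiod \<omega>. \<omega> (i + m) = \<omega> i))"

definition intrinsic_denom :: "('a \<Rightarrow> int) \<Rightarrow> ('a \<Rightarrow> nat) \<Rightarrow> (nat \<Rightarrow> 'a) \<Rightarrow> int" where
  "intrinsic_denom p q \<omega> =
     (let n = preperiod \<omega>; m = min_period \<omega>;
          q1 = (\<Prod>i<n. int (q (\<omega> i)));
          q2 = (\<Prod>i<m. int (q (\<omega> (n + i))));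
          p2 = (\<Prod>i<m. p (\<omega> (n + i)))
      in q1 * (q2 - p2))"

text \<open>Badly symbolically approximable: quantification over rationals of J
  is done via their codings (pi is a bijection onto J).\<close>
definition badly_symb_approx ::
  "'a set \<Rightarrow> ('a \<Rightarrow> int) \<Rightarrow> ('a \<Rightarrow> nat) \<Rightarrow> ('a \<Rightarrow> int) \<Rightarrow> (real \<Rightarrow> real) \<Rightarrow> real \<Rightarrow> bool" where
  "badly_symb_approx E p q r \<psi> x \<longleftrightarrow>
     (\<exists>\<epsilon>>0. \<forall>\<omega>\<in>words E. coding_map (ifs_map p q r) \<omega> \<in> \<rat> \<longrightarrow>
        \<bar>x - coding_map (ifs_map p q r) \<omega>\<bar> \<ge>
          \<epsilon> * \<psi> (of_int (intrinsic_denom p q \<omega>)) / of_int (intrinsic_denom p q \<omega>))"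

definition pseudolength :: "('a \<Rightarrow> nat) \<Rightarrow> 'a list \<Rightarrow> real" where
  "pseudolength q \<eta> = (\<Sum>a\<leftarrow>\<eta>. ln (real (q a)))"

text \<open>omega_{s+1}..omega_{s+k} (0-indexed start s, length k).\<close>
definition subword :: "(nat \<Rightarrow> 'a) \<Rightarrow> nat \<Rightarrow> nat \<Rightarrow> 'a list" where
  "subword \<omega> s k = map \<omega> [s..<s + k]"

definition slowly_varying :: "(real \<Rightarrow> real) \<Rightarrow> bool" where
  "slowly_varying \<psi> \<longleftrightarrow> (\<forall>K>0. \<exists>c C. 0 < c \<and> c \<le> C \<and>
      (\<forall>t>0. c * \<psi> t \<le> \<psi> (K * t) \<and> \<psi> (K * t) \<le> C * \<psi> t))"

definition log_psi :: "(real \<Rightarrow> real) \<Rightarrow> real \<Rightarrow> real" where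
  "log_psi \<psi> t = - ln (\<psi> (exp t))"

end

theory Submission
  imports Defs "HOL-Analysis.Elementary_Normed_Spaces"
begin

(* Write P(w,s,k) = q_{w_s} ... q_{w_{s+k-1}}, so that the pseudolength of w_s..w_{s+k-1} is
   ln P(w,s,k).  A composition u_{w_1} o ... o u_{w_k} is affine with rational coefficients and
   slope of modulus 1/P(w,0,k).  Under strong separation with interval [lo,hi] this gives:
   codings agreeing on k letters are at distance at most (hi-lo)/P(w,0,k), and at least
   delta/P(w,0,k) if they first differ at letter k; the coding map is injective; rational
   points of J are exactly the codings of eventually periodic words; and the intrinsic
   denominator of such a word w' is within a factor 2 of P(w',0,n+m) (preperiod n, period m).

   (=>) If a word occurs at positions s < t within w_1^L, the word following w up to t+k and
   then repeating w_s..w_{t-1} codes a rational with intrinsic denominator <= 2 P(w,0,t) that is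
   (hi-lo)/P(w,0,t+k)-close to x; badness of x bounds the repeated word's weight.
   (<=) A rational pi(w') first differs from w at some letter k; if k <= n+m the gap bound
   suffices, otherwise w repeats w_n..w_{k-m-1} at n+m and the repetition bound applies.
   Slow variation of psi absorbs the factors 2 in both directions. *)

definition shift_word :: "nat \<Rightarrow> (nat \<Rightarrow> 'a) \<Rightarrow> nat \<Rightarrow> 'a" where
  "shift_word k \<omega> = (\<lambda>i. \<omega> (k + i))"

lemma shift_word_apply [simp]: "shift_word k \<omega> i = \<omega> (k + i)"
  by (simp add: shift_word_def)

lemma shift_word_words: "\<omega> \<in> words E \<Longrightarrow> shift_word k \<omega> \<in> words E"
  by (simp add: words_def)

definition qprod :: "('a \<Rightarrow> nat) \<Rightarrow> (nat \<Rightarrow> 'a) \<Rightarrow> nat \<Rightarrow> nat \<Rightarrow> real" where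
  "qprod q \<omega> s k = (\<Prod>i<k. real (q (\<omega> (s + i))))"

lemma qprod_0 [simp]: "qprod q \<omega> s 0 = 1"
  by (simp add: qprod_def)

lemma qprod_Suc: "qprod q \<omega> s (Suc k) = qprod q \<omega> s k * real (q (\<omega> (s + k)))"
  by (simp add: qprod_def)

lemma qprod_add: "qprod q \<omega> s (a + b) = qprod q \<omega> s a * qprod q \<omega> (s + a) b"
  by (induction b) (simp_all add: qprod_Suc add.assoc)

lemma qprod_cong:
  "(\<And>i. i < k \<Longrightarrow> \<omega> (s + i) = \<omega>' (s' + i)) \<Longrightarrow> qprod q \<omega> s k = qprod q \<omega>' s' k"
  unfolding qprod_def by (rule prod.cong) auto

lemma word_comp_add:
  "word_comp u \<omega> (k + n) x = word_comp u \<omega> k (word_comp u (shift_word k \<omega>) n x)"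
  by (induction n arbitrary: x) simp_all

lemma word_comp_cong:
  "(\<And>i. i < k \<Longrightarrow> \<omega> i = \<omega>' i) \<Longrightarrow> word_comp u \<omega> k x = word_comp u \<omega>' k x"
  by (induction k arbitrary: x) simp_all

lemma pseudolength_subword:
  "pseudolength q (subword \<omega> s k) = (\<Sum>i<k. ln (real (q (\<omega> (s + i)))))"
proof -
  have "pseudolength q (subword \<omega> s k) = (\<Sum>j\<in>{s..<s+k}. ln (real (q (\<omega> j))))"
    unfolding pseudolength_def subword_def
    by (simp add: sum_set_upt_conv_sum_list_nat[symmetric] o_def)
  also have "\<dots> = (\<Sum>i<k. ln (real (q (\<omega> (s + i)))))"
    by (rule sum.reindex_bij_witness[where i="\<lambda>j. j + s" and j="\<lambda>i. i - s"]) auto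
  finally show ?thesis .
qed

lemma subword_eq_iff:
  "subword \<omega> s k = subword \<omega> t k \<longleftrightarrow> (\<forall>j<k. \<omega> (s + j) = \<omega> (t + j))"
  unfolding list_eq_iff_nth_eq by (auto simp: subword_def nth_map_upt)

lemma first_difference:
  fixes \<alpha> \<beta> :: "nat \<Rightarrow> 'a"
  assumes "\<alpha> \<noteq> \<beta>"
  obtains k where "\<forall>i<k. \<alpha> i = \<beta> i" and "\<alpha> k \<noteq> \<beta> k"
proof -
  have ex: "\<exists>i. \<alpha> i \<noteq> \<beta> i" using assms by auto
  show ?thesis
    by (rule that[of "LEAST i. \<alpha> i \<noteq> \<beta> i"]) (use not_less_Least LeastI_ex[OF ex] in auto)
qed

locale rational_ifs =
  fixes E :: "'a set" and p :: "'a \<Rightarrow> int" and q :: "'a \<Rightarrow> nat" and r :: "'a \<Rightarrow> int"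
  assumes ifs: "rational_IFS E p q r"
begin

abbreviation u :: "'a \<Rightarrow> real \<Rightarrow> real" where
  "u \<equiv> ifs_map p q r"

abbreviation coding :: "(nat \<Rightarrow> 'a) \<Rightarrow> real" where
  "coding \<equiv> coding_map u"

lemma q_ge_2: "a \<in> E \<Longrightarrow> q a \<ge> 2"
  using ifs by (auto simp: rational_IFS_def)

lemma p_unit: "a \<in> E \<Longrightarrow> \<bar>p a\<bar> = 1"
  using ifs by (auto simp: rational_IFS_def)

lemma qprod_ge_pow2:
  assumes "\<omega> \<in> words E"
  shows "2 ^ k \<le> qprod q \<omega> s k"
proof (induction k)
  case (Suc k)
  have "2 \<le> real (q (\<omega> (s + k)))"
    using q_ge_2[of "\<omega> (s + k)"] assms by (auto simp: words_def)
  moreover have "(0::real) \<le> 2 ^ k" by simp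
  ultimately have "2 ^ k * 2 \<le> qprod q \<omega> s k * real (q (\<omega> (s + k)))"
    using Suc by (intro mult_mono) (auto intro: order.trans[OF \<open>(0::real) \<le> 2 ^ k\<close>])
  then show ?case by (simp add: qprod_Suc mult.commute)
qed simp

lemma qprod_pos: "\<omega> \<in> words E \<Longrightarrow> 0 < qprod q \<omega> s k"
  using qprod_ge_pow2[of \<omega> k s] by (smt (verit) zero_less_power)

lemma qprod_mono:
  assumes "\<omega> \<in> words E" "k \<le> k'"
  shows "qprod q \<omega> s k \<le> qprod q \<omega> s k'"
proof -
  obtain d where d: "k' = k + d" using assms(2) le_Suc_ex by blast
  have "1 \<le> qprod q \<omega> (s + k) d"
    using qprod_ge_pow2[OF assms(1), of d "s + k"] one_le_power[of "2::real" d] by linarith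
  then show ?thesis
    using qprod_pos[OF assms(1), of s k] by (simp add: d qprod_add)
qed

lemma pseudolength_eq_ln_qprod:
  assumes "\<omega> \<in> words E"
  shows "pseudolength q (subword \<omega> s k) = ln (qprod q \<omega> s k)"
proof -
  have "0 < real (q (\<omega> (s + i)))" for i
    using q_ge_2[of "\<omega> (s + i)"] assms by (simp add: words_def)
  then show ?thesis
    unfolding pseudolength_subword qprod_def by (simp add: ln_prod)
qed

lemma word_comp_affine:
  assumes "\<omega> \<in> words E"
  shows "\<exists>a b. a \<in> \<rat> \<and> b \<in> \<rat> \<and> \<bar>a\<bar> = 1 / qprod q \<omega> 0 k \<and>
    (\<forall>x. word_comp u \<omega> k x = a * x + b)"
proof (induction k)
  case 0
  show ?case by (rule exI[of _ 1], rule exI[of _ 0]) simp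
next
  case (Suc k)
  then obtain a b where ab: "a \<in> \<rat>" "b \<in> \<rat>" "\<bar>a\<bar> = 1 / qprod q \<omega> 0 k"
    "\<forall>x. word_comp u \<omega> k x = a * x + b" by blast
  define c where "c = \<omega> k"
  have "c \<in> E" using assms by (simp add: words_def c_def)
  then have qc: "real (q c) \<ge> 2" and pc: "\<bar>real_of_int (p c)\<bar> = 1"
    using q_ge_2 p_unit by force+
  show ?case
  proof (intro exI conjI allI)
    show "a * (of_int (p c) / of_nat (q c)) \<in> \<rat>" "a * (of_int (r c) / of_nat (q c)) + b \<in> \<rat>"
      using ab by simp_all
    show "\<bar>a * (of_int (p c) / of_nat (q c))\<bar> = 1 / qprod q \<omega> 0 (Suc k)"
      using ab(3) pc qc by (simp add: qprod_Suc c_def abs_mult)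
    show "word_comp u \<omega> (Suc k) x =
        a * (of_int (p c) / of_nat (q c)) * x + (a * (of_int (r c) / of_nat (q c)) + b)" for x
      using ab(4) by (simp add: ifs_map_def c_def algebra_simps)
  qed
qed

lemma word_comp_dist:
  assumes "\<omega> \<in> words E"
  shows "\<bar>word_comp u \<omega> k x - word_comp u \<omega> k y\<bar> = \<bar>x - y\<bar> / qprod q \<omega> 0 k"
proof -
  obtain a b where "\<bar>a\<bar> = 1 / qprod q \<omega> 0 k" "\<forall>x. word_comp u \<omega> k x = a * x + b"
    using word_comp_affine[OF assms] by blast
  then show ?thesis by (simp add: right_diff_distrib[symmetric] abs_mult)
qed

end

locale separated_ifs = rational_ifs +
  fixes lo hi :: real
  assumes lo_le_hi: "lo \<le> hi"
    and maps_into: "\<forall>a\<in>E. u a ` {lo..hi} \<subseteq> {lo..hi}"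
    and images_disjoint: "\<forall>a\<in>E. \<forall>b\<in>E. a \<noteq> b \<longrightarrow> u a ` {lo..hi} \<inter> u b ` {lo..hi} = {}"
begin

lemma word_comp_in_interval:
  "\<omega> \<in> words E \<Longrightarrow> x \<in> {lo..hi} \<Longrightarrow> word_comp u \<omega> k x \<in> {lo..hi}"
proof (induction k arbitrary: x)
  case (Suc k)
  have "\<omega> k \<in> E" using Suc.prems by (auto simp: words_def)
  then have "u (\<omega> k) x \<in> {lo..hi}" using maps_into Suc.prems(2) by blast
  then show ?case using Suc.IH[OF Suc.prems(1)] by simp
qed simp

lemma word_comp_increment:
  assumes "\<omega> \<in> words E" "m \<le> n"
  shows "\<bar>word_comp u \<omega> n lo - word_comp u \<omega> m lo\<bar> \<le> (hi - lo) * (1/2) ^ m"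
proof -
  obtain d where n: "n = m + d" using \<open>m \<le> n\<close> le_Suc_ex by blast
  define y where "y = word_comp u (shift_word m \<omega>) d lo"
  have y: "y \<in> {lo..hi}"
    unfolding y_def by (rule word_comp_in_interval[OF shift_word_words[OF assms(1)]]) (use lo_le_hi in auto)
  have "\<bar>word_comp u \<omega> n lo - word_comp u \<omega> m lo\<bar> = \<bar>y - lo\<bar> / qprod q \<omega> 0 m"
    unfolding n word_comp_add y_def[symmetric] using word_comp_dist[OF assms(1)] by simp
  also have "\<dots> \<le> (hi - lo) / 2 ^ m"
    using y lo_le_hi qprod_ge_pow2[OF assms(1), of m 0] by (intro frac_le) auto
  finally show ?thesis by (simp add: power_divide)
qed

lemma word_comp_Cauchy:
  assumes "\<omega> \<in> words E"
  shows "Cauchy (\<lambda>n. word_comp u \<omega> n lo)"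
proof (rule CauchyI')
  fix e :: real assume e: "0 < e"
  obtain M where M: "(1/2::real) ^ M < e / (hi - lo + 1)"
    using real_arch_pow_inv[of "e / (hi - lo + 1)" "1/2"] e lo_le_hi by auto
  have "dist (word_comp u \<omega> m lo) (word_comp u \<omega> n lo) < e" if "M \<le> m" "m < n" for m n
  proof -
    have "dist (word_comp u \<omega> m lo) (word_comp u \<omega> n lo) \<le> (hi - lo) * (1/2) ^ m"
      using word_comp_increment[OF assms, of m n] that by (simp add: dist_real_def abs_minus_commute)
    also have "\<dots> \<le> (hi - lo + 1) * (1/2) ^ M"
      using that lo_le_hi by (intro mult_mono power_decreasing) auto
    also have "\<dots> < e" using M lo_le_hi by (simp add: field_simps)
    finally show ?thesis .
  qed
  then show "\<exists>M. \<forall>m\<ge>M. \<forall>n>m. dist (word_comp u \<omega> m lo) (word_comp u \<omega> n lo) < e" by blast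
qed

lemma word_comp_start_irrelevant:
  assumes "\<omega> \<in> words E"
  shows "(\<lambda>n. word_comp u \<omega> n x - word_comp u \<omega> n y) \<longlonglongrightarrow> 0"
proof (rule Lim_null_comparison)
  have "norm (word_comp u \<omega> n x - word_comp u \<omega> n y) \<le> \<bar>x - y\<bar> * (1/2) ^ n" for n
  proof -
    have "norm (word_comp u \<omega> n x - word_comp u \<omega> n y) = \<bar>x - y\<bar> / qprod q \<omega> 0 n"
      using word_comp_dist[OF assms] by simp
    also have "\<dots> \<le> \<bar>x - y\<bar> / 2 ^ n"
      using qprod_ge_pow2[OF assms, of n 0] qprod_pos[OF assms, of 0 n]
      by (intro divide_left_mono) auto
    finally show ?thesis by (simp add: power_divide)
  qed
  then show "\<forall>\<^sub>F n in sequentially. norm (word_comp u \<omega> n x - word_comp u \<omega> n y) \<le> \<bar>x - y\<bar> * (1/2) ^ n"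
    by (intro always_eventually allI)
  show "(\<lambda>n. \<bar>x - y\<bar> * (1/2::real) ^ n) \<longlonglongrightarrow> 0"
    by (intro tendsto_mult_right_zero LIMSEQ_power_zero) simp
qed

lemma word_comp_tendsto_coding:
  assumes "\<omega> \<in> words E"
  shows "(\<lambda>n. word_comp u \<omega> n x) \<longlonglongrightarrow> coding \<omega>"
    and "coding \<omega> \<in> {lo..hi}"
proof -
  obtain l where l: "(\<lambda>n. word_comp u \<omega> n lo) \<longlonglongrightarrow> l"
    using word_comp_Cauchy[OF assms] Cauchy_convergent_iff convergent_def by blast
  have tendsto_l: "(\<lambda>n. word_comp u \<omega> n x) \<longlonglongrightarrow> l" for x
    using tendsto_add[OF word_comp_start_irrelevant[OF assms, of x lo] l] by simp
  have coding_eq: "coding \<omega> = l"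
    unfolding coding_map_def using tendsto_l[of 0] by (rule limI)
  then show "(\<lambda>n. word_comp u \<omega> n x) \<longlonglongrightarrow> coding \<omega>"
    using tendsto_l by simp
  have "\<forall>n. word_comp u \<omega> n lo \<in> {lo..hi}" using word_comp_in_interval[OF assms] lo_le_hi by auto
  then show "coding \<omega> \<in> {lo..hi}"
    using LIMSEQ_le_const[OF l, of lo] LIMSEQ_le_const2[OF l, of hi] coding_eq by auto
qed

lemma coding_in_interval: "\<omega> \<in> words E \<Longrightarrow> coding \<omega> \<in> {lo..hi}"
  by (rule word_comp_tendsto_coding(2))

lemma coding_shift:
  assumes "\<omega> \<in> words E"
  shows "coding \<omega> = word_comp u \<omega> k (coding (shift_word k \<omega>))"
proof -
  obtain a b where ab: "\<forall>x. word_comp u \<omega> k x = a * x + b"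
    using word_comp_affine[OF assms] by blast
  have "word_comp u \<omega> (n + k) 0 = a * word_comp u (shift_word k \<omega>) n 0 + b" for n
    using word_comp_add[of u \<omega> k n 0] ab by (simp add: add.commute)
  moreover have "(\<lambda>n. a * word_comp u (shift_word k \<omega>) n 0 + b) \<longlonglongrightarrow> a * coding (shift_word k \<omega>) + b"
    by (intro tendsto_intros word_comp_tendsto_coding(1) shift_word_words assms)
  ultimately have "(\<lambda>n. word_comp u \<omega> (n + k) 0) \<longlonglongrightarrow> a * coding (shift_word k \<omega>) + b"
    by simp
  moreover have "(\<lambda>n. word_comp u \<omega> (n + k) 0) \<longlonglongrightarrow> coding \<omega>"
    using LIMSEQ_ignore_initial_segment[OF word_comp_tendsto_coding(1)[OF assms]] .
  ultimately have "coding \<omega> = a * coding (shift_word k \<omega>) + b"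
    by (rule LIMSEQ_unique[rotated])
  then show ?thesis using ab by simp
qed

lemma coding_dist_common_prefix:
  assumes "\<omega> \<in> words E" "\<omega>' \<in> words E" "\<And>i. i < k \<Longrightarrow> \<omega> i = \<omega>' i"
  shows "\<bar>coding \<omega> - coding \<omega>'\<bar> =
    \<bar>coding (shift_word k \<omega>) - coding (shift_word k \<omega>')\<bar> / qprod q \<omega> 0 k"
proof -
  have "coding \<omega>' = word_comp u \<omega> k (coding (shift_word k \<omega>'))"
    using coding_shift[OF assms(2), of k] word_comp_cong[of k \<omega> \<omega>'] assms(3) by metis
  then show ?thesis using coding_shift[OF assms(1), of k] word_comp_dist[OF assms(1)] by simp
qed

lemma coding_dist_upper:
  assumes "\<omega> \<in> words E" "\<omega>' \<in> words E" "\<And>i. i < k \<Longrightarrow> \<omega> i = \<omega>' i"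
  shows "\<bar>coding \<omega> - coding \<omega>'\<bar> \<le> (hi - lo) / qprod q \<omega> 0 k"
proof -
  have "\<bar>coding (shift_word k \<omega>) - coding (shift_word k \<omega>')\<bar> \<le> hi - lo"
    using coding_in_interval[OF shift_word_words[OF assms(1)], of k]
      coding_in_interval[OF shift_word_words[OF assms(2)], of k] by auto
  then have "\<bar>coding (shift_word k \<omega>) - coding (shift_word k \<omega>')\<bar> / qprod q \<omega> 0 k \<le>
      (hi - lo) / qprod q \<omega> 0 k"
    using qprod_pos[OF assms(1), of 0 k] by (simp add: divide_right_mono)
  then show ?thesis using coding_dist_common_prefix[OF assms] by simp
qed

lemma first_level_gap:
  obtains \<delta> where "\<delta> > 0"
    and "\<And>a b y z. a \<in> E \<Longrightarrow> b \<in> E \<Longrightarrow> a \<noteq> b \<Longrightarrow> y \<in> {lo..hi} \<Longrightarrow> z \<in> {lo..hi} \<Longrightarrow>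
           \<delta> \<le> \<bar>u a y - u b z\<bar>"
proof -
  define F where "F = {(a, b). a \<in> E \<and> b \<in> E \<and> a \<noteq> b}"
  have "finite F"
    using ifs unfolding F_def rational_IFS_def by (rule_tac finite_subset[of _ "E \<times> E"]) auto
  have "\<forall>x\<in>F. \<exists>d>0. \<forall>y\<in>{lo..hi}. \<forall>z\<in>{lo..hi}. d \<le> \<bar>u (fst x) y - u (snd x) z\<bar>"
  proof
    fix x assume "x \<in> F"
    then obtain a b where ab: "x = (a, b)" "a \<in> E" "b \<in> E" "a \<noteq> b" by (auto simp: F_def)
    have cont: "continuous_on {lo..hi} (u c)" for c
      unfolding ifs_map_def by (intro continuous_intros)
    have "compact (u a ` {lo..hi})" "closed (u b ` {lo..hi})"
      by (intro compact_imp_closed compact_continuous_image cont compact_Icc)+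
    from separate_compact_closed[OF this] obtain d where
      "d > 0" "\<forall>y\<in>u a ` {lo..hi}. \<forall>z\<in>u b ` {lo..hi}. d \<le> dist y z"
      using images_disjoint ab by blast
    then show "\<exists>d>0. \<forall>y\<in>{lo..hi}. \<forall>z\<in>{lo..hi}. d \<le> \<bar>u (fst x) y - u (snd x) z\<bar>"
      using ab by (auto simp: dist_real_def)
  qed
  then obtain d where d: "\<forall>x\<in>F. d x > 0 \<and>
      (\<forall>y\<in>{lo..hi}. \<forall>z\<in>{lo..hi}. d x \<le> \<bar>u (fst x) y - u (snd x) z\<bar>)"
    by metis
  show ?thesis
  proof (rule that[of "Min (insert 1 (d ` F))"])
    show "0 < Min (insert 1 (d ` F))" using \<open>finite F\<close> d by (subst Min_gr_iff) auto
    fix a b y z assume "a \<in> E" "b \<in> E" "a \<noteq> b" "y \<in> {lo..hi}" "z \<in> {lo..hi}"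
    then have "(a, b) \<in> F" by (simp add: F_def)
    then have "Min (insert 1 (d ` F)) \<le> d (a, b)" using \<open>finite F\<close> by (intro Min_le) auto
    also have "\<dots> \<le> \<bar>u a y - u b z\<bar>" using d \<open>(a, b) \<in> F\<close> \<open>y \<in> _\<close> \<open>z \<in> _\<close> by force
    finally show "Min (insert 1 (d ` F)) \<le> \<bar>u a y - u b z\<bar>" .
  qed
qed

lemma coding_dist_lower:
  obtains \<delta> where "\<delta> > 0"
    and "\<And>\<omega> \<omega>' k. \<omega> \<in> words E \<Longrightarrow> \<omega>' \<in> words E \<Longrightarrow> \<forall>i<k. \<omega> i = \<omega>' i \<Longrightarrow> \<omega> k \<noteq> \<omega>' k \<Longrightarrow>
           \<delta> / qprod q \<omega> 0 k \<le> \<bar>coding \<omega> - coding \<omega>'\<bar>"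
proof -
  obtain \<delta> where \<delta>: "\<delta> > 0"
    "\<And>a b y z. a \<in> E \<Longrightarrow> b \<in> E \<Longrightarrow> a \<noteq> b \<Longrightarrow> y \<in> {lo..hi} \<Longrightarrow> z \<in> {lo..hi} \<Longrightarrow>
       \<delta> \<le> \<bar>u a y - u b z\<bar>"
    using first_level_gap by blast
  show ?thesis
  proof (rule that[OF \<delta>(1)])
    fix \<omega> \<omega>' k assume w: "\<omega> \<in> words E" "\<omega>' \<in> words E"
      and agree: "\<forall>i<k. \<omega> i = \<omega>' i" and differ: "\<omega> k \<noteq> \<omega>' k"
    define \<alpha> \<beta> where "\<alpha> = shift_word k \<omega>" and "\<beta> = shift_word k \<omega>'"
    have ab: "\<alpha> \<in> words E" "\<beta> \<in> words E" using w shift_word_words \<alpha>_def \<beta>_def by auto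
    have "\<alpha> 0 \<in> E" "\<beta> 0 \<in> E" using ab unfolding words_def by blast+
    moreover have "\<alpha> 0 \<noteq> \<beta> 0" using differ by (simp add: \<alpha>_def \<beta>_def)
    moreover have "coding (shift_word 1 \<alpha>) \<in> {lo..hi}" "coding (shift_word 1 \<beta>) \<in> {lo..hi}"
      using coding_in_interval shift_word_words ab by blast+
    ultimately have "\<delta> \<le> \<bar>u (\<alpha> 0) (coding (shift_word 1 \<alpha>)) - u (\<beta> 0) (coding (shift_word 1 \<beta>))\<bar>"
      by (rule \<delta>(2))
    then have "\<delta> \<le> \<bar>coding \<alpha> - coding \<beta>\<bar>"
      using coding_shift[OF ab(1), of 1] coding_shift[OF ab(2), of 1] by simp
    moreover have "\<bar>coding \<omega> - coding \<omega>'\<bar> = \<bar>coding \<alpha> - coding \<beta>\<bar> / qprod q \<omega> 0 k"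
      unfolding \<alpha>_def \<beta>_def by (rule coding_dist_common_prefix[OF w]) (use agree in auto)
    ultimately show "\<delta> / qprod q \<omega> 0 k \<le> \<bar>coding \<omega> - coding \<omega>'\<bar>"
      using qprod_pos[OF w(1), of 0 k] by (simp add: divide_right_mono)
  qed
qed

lemma coding_inj:
  assumes "\<alpha> \<in> words E" "\<beta> \<in> words E" "coding \<alpha> = coding \<beta>"
  shows "\<alpha> = \<beta>"
proof (rule ccontr)
  assume "\<alpha> \<noteq> \<beta>"
  then obtain k where k: "\<forall>i<k. \<alpha> i = \<beta> i" "\<alpha> k \<noteq> \<beta> k" by (rule first_difference)
  obtain \<delta> where "\<delta> > 0"
    and gap: "\<And>\<omega> \<omega>' j. \<omega> \<in> words E \<Longrightarrow> \<omega>' \<in> words E \<Longrightarrow> \<forall>i<j. \<omega> i = \<omega>' i \<Longrightarrow>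
           \<omega> j \<noteq> \<omega>' j \<Longrightarrow> \<delta> / qprod q \<omega> 0 j \<le> \<bar>coding \<omega> - coding \<omega>'\<bar>"
    by (rule coding_dist_lower) simp
  have "\<delta> / qprod q \<alpha> 0 k \<le> 0" using gap[OF assms(1,2) k] assms(3) by simp
  then show False using \<open>\<delta> > 0\<close> qprod_pos[OF assms(1), of 0 k] by (simp add: divide_le_0_iff)
qed

end

definition eventually_periodic :: "(nat \<Rightarrow> 'a) \<Rightarrow> bool" where
  "eventually_periodic \<omega> \<longleftrightarrow> (\<exists>n m. m > 0 \<and> (\<forall>i\<ge>n. \<omega> (i + m) = \<omega> i))"

lemma equal_shifts_eventually_periodic:
  assumes "j < j'" and shifts_eq: "shift_word j \<omega> = shift_word j' \<omega>"
  shows "eventually_periodic \<omega>"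
proof -
  have "\<omega> (i + (j' - j)) = \<omega> i" if "j \<le> i" for i
  proof -
    have "\<omega> (j' + (i - j)) = \<omega> (j + (i - j))" using fun_cong[OF shifts_eq, of "i - j"] by simp
    moreover have "j' + (i - j) = i + (j' - j)" "j + (i - j) = i" using that \<open>j < j'\<close> by simp_all
    ultimately show ?thesis by simp
  qed
  then show ?thesis
    unfolding eventually_periodic_def using \<open>j < j'\<close> by (intro exI[of _ j] exI[of _ "j' - j"]) simp
qed

lemma periodic_iterate:
  fixes j :: nat
  assumes "\<forall>i\<ge>n. \<omega> (i + m) = \<omega> i" "n \<le> i"
  shows "\<omega> (i + j * m) = \<omega> i"
proof (induction j)
  case (Suc j)
  have "\<omega> (i + Suc j * m) = \<omega> ((i + j * m) + m)" by (simp add: add_ac)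
  also have "\<dots> = \<omega> (i + j * m)" using assms by simp
  finally show ?case using Suc by simp
qed simp

lemma preperiod_period:
  assumes "eventually_periodic \<omega>"
  shows "min_period \<omega> > 0" and "\<forall>i\<ge>preperiod \<omega>. \<omega> (i + min_period \<omega>) = \<omega> i"
proof -
  have "\<exists>m>0. \<forall>i\<ge>preperiod \<omega>. \<omega> (i + m) = \<omega> i"
    unfolding preperiod_def by (rule LeastI_ex) (use assms in \<open>auto simp: eventually_periodic_def\<close>)
  then have "min_period \<omega> > 0 \<and> (\<forall>i\<ge>preperiod \<omega>. \<omega> (i + min_period \<omega>) = \<omega> i)"
    unfolding min_period_def by (rule LeastI_ex)
  then show "min_period \<omega> > 0" "\<forall>i\<ge>preperiod \<omega>. \<omega> (i + min_period \<omega>) = \<omega> i" by auto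
qed

text \<open>Minimality of preperiod and period: every representation \<omega> periodic from s with
  period d has s + d at least preperiod + minimal period.  (A period d valid from s is also
  valid from the preperiod, since both are periods of the eventual tail.)\<close>
lemma preperiod_period_minimal:
  assumes "d > 0" and per: "\<forall>i\<ge>s. \<omega> (i + d) = \<omega> i"
  shows "preperiod \<omega> + min_period \<omega> \<le> s + d"
proof -
  have ev: "eventually_periodic \<omega>" using assms by (auto simp: eventually_periodic_def)
  define n where "n = preperiod \<omega>"
  have "n \<le> s" unfolding n_def preperiod_def by (rule Least_le) (use assms in blast)
  have "\<omega> (i + d) = \<omega> i" if "n \<le> i" for i
  proof -
    define m where "m = min_period \<omega>"
    have m: "m > 0" "\<forall>i\<ge>n. \<omega> (i + m) = \<omega> i" using preperiod_period[OF ev] by (simp_all add: m_def n_def)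
    have "s \<le> i + s * m" using m(1) by (simp add: trans_le_add2)
    have "\<omega> (i + d) = \<omega> ((i + s * m) + d)"
      using periodic_iterate[OF m(2), of "i + d" s] that by (simp add: add_ac)
    also have "\<dots> = \<omega> (i + s * m)" using per \<open>s \<le> i + s * m\<close> by blast
    also have "\<dots> = \<omega> i" using periodic_iterate[OF m(2) that] .
    finally show ?thesis .
  qed
  then have "min_period \<omega> \<le> d"
    unfolding min_period_def n_def[symmetric] by (intro Least_le) (use assms in blast)
  then show ?thesis using \<open>n \<le> s\<close> by (simp add: n_def)
qed

context rational_ifs
begin

text \<open>The intrinsic denominator of an eventually periodic word is within a factor 2 of
  P(\<omega>,0,n+m), because q_(2) \<ge> 2 and p_(2) = \<plusminus>1.\<close>
lemma intrinsic_denom_bounds: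
  assumes w: "\<omega> \<in> words E" and ev: "eventually_periodic \<omega>"
  defines "N \<equiv> preperiod \<omega> + min_period \<omega>"
  shows "qprod q \<omega> 0 N / 2 \<le> intrinsic_denom p q \<omega>"
    and "intrinsic_denom p q \<omega> \<le> 2 * qprod q \<omega> 0 N"
proof -
  define n m where "n = preperiod \<omega>" and "m = min_period \<omega>"
  define p2 where "p2 = (\<Prod>i<m. real_of_int (p (\<omega> (n + i))))"
  have denom: "real_of_int (intrinsic_denom p q \<omega>) = qprod q \<omega> 0 n * (qprod q \<omega> n m - p2)"
    unfolding intrinsic_denom_def Let_def qprod_def p2_def n_def m_def by simp
  have "\<bar>p2\<bar> = (\<Prod>i<m. \<bar>real_of_int (p (\<omega> (n + i)))\<bar>)" unfolding p2_def by (rule abs_prod)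
  also have "\<dots> = 1"
  proof (intro prod.neutral ballI)
    fix i have "\<omega> (n + i) \<in> E" using w by (simp add: words_def)
    then show "\<bar>real_of_int (p (\<omega> (n + i)))\<bar> = 1" using p_unit by (metis of_int_1 of_int_abs)
  qed
  finally have p2: "\<bar>p2\<bar> = 1" by simp
  have "(2::real) ^ 1 \<le> 2 ^ m" using preperiod_period(1)[OF ev] by (intro power_increasing) (auto simp: m_def)
  then have "2 \<le> qprod q \<omega> n m" using qprod_ge_pow2[OF w, of m n] by simp
  then have "qprod q \<omega> n m / 2 \<le> qprod q \<omega> n m - p2" "qprod q \<omega> n m - p2 \<le> 2 * qprod q \<omega> n m"
    using p2 by auto
  moreover have "qprod q \<omega> 0 N = qprod q \<omega> 0 n * qprod q \<omega> n m"
    unfolding N_def n_def m_def by (simp add: qprod_add)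
  ultimately show "qprod q \<omega> 0 N / 2 \<le> intrinsic_denom p q \<omega>"
    and "intrinsic_denom p q \<omega> \<le> 2 * qprod q \<omega> 0 N"
    unfolding denom using qprod_pos[OF w, of 0 n] by (simp_all add: mult_left_mono)
qed

end

context separated_ifs
begin

text \<open>Codings of eventually periodic words are rational: the periodic tail codes the fixed
  point of an affine map with rational coefficients and slope of modulus < 1.\<close>
lemma periodic_coding_rational:
  assumes w: "\<omega> \<in> words E" and ev: "eventually_periodic \<omega>"
  shows "coding \<omega> \<in> \<rat>"
proof -
  obtain s d where d: "d > 0" and per: "\<forall>i\<ge>s. \<omega> (i + d) = \<omega> i"
    using ev by (auto simp: eventually_periodic_def)
  define \<alpha> where "\<alpha> = shift_word s \<omega>"
  have \<alpha>: "\<alpha> \<in> words E" using w by (simp add: \<alpha>_def shift_word_words)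
  have "shift_word d \<alpha> = \<alpha>"
  proof
    fix i show "shift_word d \<alpha> i = \<alpha> i" using per[rule_format, of "s + i"] by (simp add: \<alpha>_def add_ac)
  qed
  obtain a b where ab: "a \<in> \<rat>" "b \<in> \<rat>" "\<bar>a\<bar> = 1 / qprod q \<alpha> 0 d"
    "\<forall>x. word_comp u \<alpha> d x = a * x + b" using word_comp_affine[OF \<alpha>] by blast
  have "(2::real) ^ 1 \<le> 2 ^ d" using d by (intro power_increasing) auto
  then have "2 \<le> qprod q \<alpha> 0 d" using qprod_ge_pow2[OF \<alpha>, of d 0] by simp
  then have "1 - a \<noteq> 0" using ab(3) by auto
  moreover have "coding \<alpha> = a * coding \<alpha> + b"
    using coding_shift[OF \<alpha>, of d] ab(4) \<open>shift_word d \<alpha> = \<alpha>\<close> by simp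
  ultimately have "coding \<alpha> = b / (1 - a)" by (simp add: field_simps)
  then have "coding \<alpha> \<in> \<rat>" using ab by simp
  moreover obtain a' b' where "a' \<in> \<rat>" "b' \<in> \<rat>" "\<forall>x. word_comp u \<omega> s x = a' * x + b'"
    using word_comp_affine[OF w] by blast
  ultimately show ?thesis using coding_shift[OF w, of s] by (simp add: \<alpha>_def)
qed

text \<open>If \<pi>(\<omega>) = N/D, then every \<pi>(\<sigma>^j \<omega>) is again a fraction with denominator D,
  because \<pi>(\<sigma>^{j+1} \<omega>) = p_a (q_a \<pi>(\<sigma>^j \<omega>) - r_a) for a = \<omega>_j.\<close>
lemma shift_codings_common_denominator:
  assumes w: "\<omega> \<in> words E" and "D \<noteq> 0" and D: "coding \<omega> = of_int N0 / of_int D"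
  shows "\<exists>N::int. coding (shift_word j \<omega>) = of_int N / of_int D"
proof (induction j)
  case 0 show ?case using D by (auto simp: shift_word_def)
next
  case (Suc j)
  then obtain N where N: "coding (shift_word j \<omega>) = of_int N / of_int D" by blast
  define c where "c = \<omega> j"
  have "c \<in> E" using w by (simp add: c_def words_def)
  then have q0: "real (q c) > 0" and "p c = 1 \<or> p c = -1"
    using q_ge_2[of c] p_unit[of c] by auto
  then have pp: "real_of_int (p c) * real_of_int (p c) = 1" by auto
  have "coding (shift_word j \<omega>) = u c (coding (shift_word (Suc j) \<omega>))"
    using coding_shift[OF shift_word_words[OF w], of j 1] by (simp add: c_def shift_word_def)
  then have "coding (shift_word (Suc j) \<omega>) =
      real_of_int (p c) * (real (q c) * coding (shift_word j \<omega>) - real_of_int (r c))"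
    using q0 pp by (simp add: ifs_map_def field_simps)
  also have "\<dots> = of_int (p c * (int (q c) * N - r c * D)) / of_int D"
    using N \<open>D \<noteq> 0\<close> by (simp add: field_simps)
  finally show ?case by (rule exI)
qed

text \<open>Consequently a rational coding has only finitely many shifted codings: they are
  fractions with a fixed denominator inside [lo, hi].\<close>
lemma shift_codings_finite:
  assumes w: "\<omega> \<in> words E" and rat: "coding \<omega> \<in> \<rat>"
  shows "finite (range (\<lambda>j. coding (shift_word j \<omega>)))"
proof -
  obtain N0 D :: int where D: "D > 0" "coding \<omega> = of_int N0 / of_int D"
    using Rats_cases'[OF rat] by metis
  have "range (\<lambda>j. coding (shift_word j \<omega>)) \<subseteq>
      (\<lambda>N. real_of_int N / real_of_int D) ` {\<lfloor>lo * D\<rfloor>..\<lceil>hi * D\<rceil>}"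
  proof
    fix x assume "x \<in> range (\<lambda>j. coding (shift_word j \<omega>))"
    then obtain j N where x: "x = coding (shift_word j \<omega>)" and N: "x = of_int N / of_int D"
      using shift_codings_common_denominator[OF w _ D(2)] D(1) by blast
    have "x \<in> {lo..hi}" unfolding x by (rule coding_in_interval[OF shift_word_words[OF w]])
    then have "lo * D \<le> N" "N \<le> hi * D" using N D by (auto simp: field_simps)
    then have "N \<in> {\<lfloor>lo * D\<rfloor>..\<lceil>hi * D\<rceil>}" by (simp add: floor_le_iff le_ceiling_iff)
    then show "x \<in> (\<lambda>N. real_of_int N / real_of_int D) ` {\<lfloor>lo * D\<rfloor>..\<lceil>hi * D\<rceil>}"
      using N by blast
  qed
  then show ?thesis using finite_subset by blast
qed

text \<open>Rational points of J have eventually periodic codings: by finiteness two shifts have the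
  same coding, hence (by injectivity) are equal.\<close>
lemma rational_coding_eventually_periodic:
  assumes w: "\<omega> \<in> words E" and rat: "coding \<omega> \<in> \<rat>"
  shows "eventually_periodic \<omega>"
proof -
  have "\<not> inj (\<lambda>j. coding (shift_word j \<omega>))"
    using shift_codings_finite[OF w rat] finite_imageD infinite_UNIV_nat by blast
  then obtain j j' where "j \<noteq> j'" "coding (shift_word j \<omega>) = coding (shift_word j' \<omega>)"
    unfolding inj_def by blast
  then have "j \<noteq> j'" "shift_word j \<omega> = shift_word j' \<omega>"
    using coding_inj[OF shift_word_words[OF w] shift_word_words[OF w]] by blast+
  then show ?thesis
    by (cases "j < j'") (auto intro: equal_shifts_eventually_periodic simp: nat_neq_iff)
qed

end

definition repetitions_bounded :: "('a \<Rightarrow> nat) \<Rightarrow> (real \<Rightarrow> real) \<Rightarrow> (nat \<Rightarrow> 'a) \<Rightarrow> real \<Rightarrow> bool" where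
  "repetitions_bounded q \<psi> \<omega> K \<longleftrightarrow> (\<forall>L::nat. \<forall>\<eta>::'a list.
       (\<exists>s t. s \<noteq> t \<and> s + length \<eta> \<le> L \<and> t + length \<eta> \<le> L \<and>
              subword \<omega> s (length \<eta>) = \<eta> \<and> subword \<omega> t (length \<eta>) = \<eta>) \<longrightarrow>
       pseudolength q \<eta> \<le> K + log_psi \<psi> (pseudolength q (subword \<omega> 0 (L - length \<eta>))))"

lemma ln_le_log_psi_iff:
  assumes "P > 0" "A > 0" "\<psi> A > 0"
  shows "ln P \<le> K + log_psi \<psi> (ln A) \<longleftrightarrow> P * \<psi> A \<le> exp K"
proof -
  have "ln P \<le> K + log_psi \<psi> (ln A) \<longleftrightarrow> ln (P * \<psi> A) \<le> ln (exp K)"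
    using assms by (simp add: log_psi_def ln_mult algebra_simps)
  also have "\<dots> \<longleftrightarrow> P * \<psi> A \<le> exp K"
    using assms by (intro ln_le_cancel_iff) auto
  finally show ?thesis .
qed

lemma slowly_varying_doubling:
  assumes "slowly_varying \<psi>"
  obtains c where "c > 0" "\<forall>x>0. c * \<psi> x \<le> \<psi> (2 * x)"
proof -
  obtain c C where "0 < c" "\<forall>x>0. c * \<psi> x \<le> \<psi> (2 * x) \<and> \<psi> (2 * x) \<le> C * \<psi> x"
    using assms[unfolded slowly_varying_def, rule_format, of 2] by auto
  then show ?thesis using that by blast
qed

lemma slowly_varying_halving:
  assumes "slowly_varying \<psi>"
  obtains C where "C > 0" "\<forall>x>0. \<psi> ((1/2) * x) \<le> C * \<psi> x"
proof -
  obtain c C where "0 < c" "c \<le> C" "\<forall>x>0. c * \<psi> x \<le> \<psi> ((1/2) * x) \<and> \<psi> ((1/2) * x) \<le> C * \<psi> x"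
    using assms[unfolded slowly_varying_def, rule_format, of "1/2"] by auto
  moreover have "C > 0" using \<open>0 < c\<close> \<open>c \<le> C\<close> by simp
  ultimately show ?thesis using that[of C] by blast
qed

context rational_ifs
begin

lemma repetition_inequality_iff:
  assumes w: "\<omega> \<in> words E" and psi_pos: "\<forall>x>0. \<psi> x > 0"
  shows "pseudolength q (subword \<omega> t R) \<le> K + log_psi \<psi> (pseudolength q (subword \<omega> 0 (L - R)))
    \<longleftrightarrow> qprod q \<omega> t R * \<psi> (qprod q \<omega> 0 (L - R)) \<le> exp K"
  unfolding pseudolength_eq_ln_qprod[OF w]
  using qprod_pos[OF w] psi_pos by (intro ln_le_log_psi_iff) auto

lemma repetitions_bounded_iff:
  assumes w: "\<omega> \<in> words E" and psi_pos: "\<forall>x>0. \<psi> x > 0"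
  shows "repetitions_bounded q \<psi> \<omega> K \<longleftrightarrow>
    (\<forall>s t R L. s < t \<longrightarrow> t + R \<le> L \<longrightarrow> (\<forall>j<R. \<omega> (s + j) = \<omega> (t + j)) \<longrightarrow>
       qprod q \<omega> t R * \<psi> (qprod q \<omega> 0 (L - R)) \<le> exp K)"
    (is "_ \<longleftrightarrow> (\<forall>s t R L. ?rep s t R L)")
proof -
  note bound_iff = repetition_inequality_iff[OF w psi_pos]
  show ?thesis
  proof
    assume bounded: "repetitions_bounded q \<psi> \<omega> K"
    show "\<forall>s t R L. ?rep s t R L"
    proof (intro allI impI)
      fix s t R L assume "s < t" "t + R \<le> L" "\<forall>j<R. \<omega> (s + j) = \<omega> (t + j)"
      then have "s \<noteq> t \<and> s + length (subword \<omega> t R) \<le> L \<and> t + length (subword \<omega> t R) \<le> L \<and>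
          subword \<omega> s (length (subword \<omega> t R)) = subword \<omega> t R \<and>
          subword \<omega> t (length (subword \<omega> t R)) = subword \<omega> t R"
        by (simp add: subword_def subword_eq_iff[unfolded subword_def])
      then have "pseudolength q (subword \<omega> t R) \<le> K +
          log_psi \<psi> (pseudolength q (subword \<omega> 0 (L - length (subword \<omega> t R))))"
        using bounded[unfolded repetitions_bounded_def, rule_format, of "subword \<omega> t R" L] by blast
      then show "qprod q \<omega> t R * \<psi> (qprod q \<omega> 0 (L - R)) \<le> exp K"
        using bound_iff by (simp add: subword_def)
    qed
  next
    assume rep: "\<forall>s t R L. ?rep s t R L"
    show "repetitions_bounded q \<psi> \<omega> K"
      unfolding repetitions_bounded_def
    proof (intro allI impI, elim exE conjE)
      fix L \<eta> s t assume "s \<noteq> t" "s + length \<eta> \<le> L" "t + length \<eta> \<le> L"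
        and at_s: "subword \<omega> s (length \<eta>) = \<eta>" and at_t: "subword \<omega> t (length \<eta>) = \<eta>"
      define R where "R = length \<eta>"
      have agree: "\<forall>j<R. \<omega> (s + j) = \<omega> (t + j)"
        using at_s at_t subword_eq_iff unfolding R_def by metis
      have same_weight: "qprod q \<omega> s R = qprod q \<omega> t R"
        using agree by (intro qprod_cong) auto
      have "qprod q \<omega> t R * \<psi> (qprod q \<omega> 0 (L - R)) \<le> exp K"
      proof (cases "s < t")
        case True then show ?thesis using rep agree \<open>t + length \<eta> \<le> L\<close> by (auto simp: R_def)
      next
        case False
        then have "t < s" using \<open>s \<noteq> t\<close> by simp
        moreover have "\<forall>j<R. \<omega> (t + j) = \<omega> (s + j)" using agree by simp
        ultimately have "qprod q \<omega> s R * \<psi> (qprod q \<omega> 0 (L - R)) \<le> exp K"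
          using rep \<open>s + length \<eta> \<le> L\<close> by (auto simp: R_def)
        then show ?thesis using same_weight by simp
      qed
      then show "pseudolength q \<eta> \<le> K + log_psi \<psi> (pseudolength q (subword \<omega> 0 (L - length \<eta>)))"
        using bound_iff at_t unfolding R_def by metis
    qed
  qed
qed

end

lemma periodic_extension:
  fixes \<omega> :: "nat \<Rightarrow> 'a"
  assumes "s < t" and match: "\<forall>j<k. \<omega> (s + j) = \<omega> (t + j)"
  defines "\<omega>' \<equiv> \<lambda>i. if i < s then \<omega> i else \<omega> (s + (i - s) mod (t - s))"
  shows "\<forall>i\<ge>s. \<omega>' (i + (t - s)) = \<omega>' i" and "\<forall>i<t + k. \<omega>' i = \<omega> i"
proof -
  define d where "d = t - s"
  have d: "d > 0" "t = s + d" using \<open>s < t\<close> by (auto simp: d_def)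
  show per: "\<forall>i\<ge>s. \<omega>' (i + (t - s)) = \<omega>' i"
  proof (intro allI impI)
    fix i assume "s \<le> i"
    then have "(i + d - s) mod d = (i - s) mod d" by (metis Nat.add_diff_assoc2 mod_add_self2)
    then show "\<omega>' (i + (t - s)) = \<omega>' i" using \<open>s \<le> i\<close> by (simp add: \<omega>'_def d_def)
  qed
  show "\<forall>i<t + k. \<omega>' i = \<omega> i"
  proof (intro allI impI)
    fix i assume "i < t + k"
    then show "\<omega>' i = \<omega> i"
    proof (induction i rule: less_induct)
      case (less i)
      show ?case
      proof (cases "i < t")
        case True
        then show ?thesis using d by (simp add: \<omega>'_def)
      next
        case False
        define j where "j = i - t"
        have j: "j < k" "i = (s + j) + d" using False less.prems d by (auto simp: j_def)
        then have "\<omega>' i = \<omega>' (s + j)" using per by (simp add: d_def)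
        also have "\<dots> = \<omega> (s + j)" using less.IH[of "s + j"] j d by simp
        also have "\<dots> = \<omega> i" using match j d by (simp add: add_ac)
        finally show ?thesis .
      qed
    qed
  qed
qed

context separated_ifs
begin

lemma repetition_yields_rational:
  assumes w: "\<omega> \<in> words E" and "s < t" and match: "\<forall>j<k. \<omega> (s + j) = \<omega> (t + j)"
  obtains \<omega>' where "\<omega>' \<in> words E" "coding \<omega>' \<in> \<rat>" "\<forall>i<t + k. \<omega>' i = \<omega> i"
    "0 < intrinsic_denom p q \<omega>'" "intrinsic_denom p q \<omega>' \<le> 2 * qprod q \<omega> 0 t"
proof -
  define \<omega>' where "\<omega>' i = (if i < s then \<omega> i else \<omega> (s + (i - s) mod (t - s)))" for i
  have per: "\<forall>i\<ge>s. \<omega>' (i + (t - s)) = \<omega>' i" and agree: "\<forall>i<t + k. \<omega>' i = \<omega> i"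
    using periodic_extension[OF \<open>s < t\<close> match] unfolding \<omega>'_def by blast+
  have w': "\<omega>' \<in> words E" using w by (simp add: words_def \<omega>'_def)
  have ev: "eventually_periodic \<omega>'"
    using per \<open>s < t\<close> unfolding eventually_periodic_def by (metis zero_less_diff)
  define N where "N = preperiod \<omega>' + min_period \<omega>'"
  have "N \<le> t"
    using preperiod_period_minimal[of "t - s" s \<omega>'] per \<open>s < t\<close> by (simp add: N_def)
  then have "qprod q \<omega>' 0 N \<le> qprod q \<omega>' 0 t" by (rule qprod_mono[OF w'])
  also have "\<dots> = qprod q \<omega> 0 t" using agree by (intro qprod_cong) auto
  finally have "qprod q \<omega>' 0 N \<le> qprod q \<omega> 0 t" .
  then show ?thesis
    using that[OF w' periodic_coding_rational[OF w' ev] agree] qprod_pos[OF w', of 0 N]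
      intrinsic_denom_bounds[OF w' ev] unfolding N_def by force
qed

lemma badly_approx_repetition_weight:
  assumes psi_pos: "\<forall>x>0. \<psi> x > 0" and psi_noninc: "\<forall>x y. 0 < x \<and> x \<le> y \<longrightarrow> \<psi> y \<le> \<psi> x"
    and c: "c > 0" "\<forall>x>0. c * \<psi> x \<le> \<psi> (2 * x)"
    and w: "\<omega> \<in> words E" and \<epsilon>: "\<epsilon> > 0"
    and bad: "\<forall>\<omega>'\<in>words E. coding \<omega>' \<in> \<rat> \<longrightarrow>
      \<epsilon> * \<psi> (intrinsic_denom p q \<omega>') / intrinsic_denom p q \<omega>' \<le> \<bar>coding \<omega> - coding \<omega>'\<bar>"
    and "s < t" "t + k \<le> L" and match: "\<forall>j<k. \<omega> (s + j) = \<omega> (t + j)"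
  shows "qprod q \<omega> t k * \<psi> (qprod q \<omega> 0 (L - k)) \<le> 2 * (hi - lo + 1) / (\<epsilon> * c)"
proof -
  obtain \<omega>' where w': "\<omega>' \<in> words E" and rat: "coding \<omega>' \<in> \<rat>" and agree: "\<forall>i<t + k. \<omega>' i = \<omega> i"
    and Q: "0 < intrinsic_denom p q \<omega>'" "intrinsic_denom p q \<omega>' \<le> 2 * qprod q \<omega> 0 t"
    using repetition_yields_rational[OF w \<open>s < t\<close> match] by blast
  define A B Q where "A = qprod q \<omega> 0 t" and "B = qprod q \<omega> t k"
    and "Q = real_of_int (intrinsic_denom p q \<omega>')"
  have pos: "A > 0" "B > 0" "Q > 0" "\<psi> A > 0" "\<psi> Q > 0"
    using qprod_pos[OF w] Q psi_pos by (auto simp: A_def B_def Q_def)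
  have "Q \<le> 2 * A" using Q by (simp add: A_def Q_def)
  then have "\<psi> (2 * A) \<le> \<psi> Q" using psi_noninc pos by blast
  then have "c * \<psi> A \<le> \<psi> Q" using c(2) pos by fastforce
  then have "\<epsilon> * (c * \<psi> A) / (2 * A) \<le> \<epsilon> * \<psi> Q / Q"
    using \<epsilon> pos \<open>Q \<le> 2 * A\<close> by (intro frac_le) auto
  also have "\<dots> \<le> \<bar>coding \<omega> - coding \<omega>'\<bar>" using bad w' rat by (simp add: Q_def)
  also have "\<dots> \<le> (hi - lo) / qprod q \<omega> 0 (t + k)"
    by (rule coding_dist_upper[OF w w']) (use agree in auto)
  also have "\<dots> = (hi - lo) / (A * B)" by (simp add: A_def B_def qprod_add)
  finally have "B * \<psi> A \<le> 2 * (hi - lo) / (\<epsilon> * c)"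
    using pos \<epsilon> c(1) by (simp add: field_simps)
  moreover have "\<psi> (qprod q \<omega> 0 (L - k)) \<le> \<psi> A"
    using psi_noninc pos qprod_mono[OF w, of t "L - k" 0] \<open>t + k \<le> L\<close> by (simp add: A_def)
  ultimately have "B * \<psi> (qprod q \<omega> 0 (L - k)) \<le> 2 * (hi - lo) / (\<epsilon> * c)"
    using pos by (smt (verit) mult_left_mono)
  also have "\<dots> \<le> 2 * (hi - lo + 1) / (\<epsilon> * c)" using \<epsilon> c(1) by (simp add: divide_right_mono)
  finally show ?thesis by (simp add: B_def)
qed

lemma badly_approx_imp_repetitions_bounded:
  assumes psi_pos: "\<forall>x>0. \<psi> x > 0" and psi_noninc: "\<forall>x y. 0 < x \<and> x \<le> y \<longrightarrow> \<psi> y \<le> \<psi> x"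
    and c: "c > 0" "\<forall>x>0. c * \<psi> x \<le> \<psi> (2 * x)"
    and w: "\<omega> \<in> words E" and bad: "badly_symb_approx E p q r \<psi> (coding \<omega>)"
  shows "\<exists>K. repetitions_bounded q \<psi> \<omega> K"
proof -
  obtain \<epsilon> where \<epsilon>: "\<epsilon> > 0" and bad_\<epsilon>: "\<forall>\<omega>'\<in>words E. coding \<omega>' \<in> \<rat> \<longrightarrow>
      \<epsilon> * \<psi> (intrinsic_denom p q \<omega>') / intrinsic_denom p q \<omega>' \<le> \<bar>coding \<omega> - coding \<omega>'\<bar>"
    using bad unfolding badly_symb_approx_def by blast
  define K where "K = ln (2 * (hi - lo + 1) / (\<epsilon> * c))"
  have "exp K = 2 * (hi - lo + 1) / (\<epsilon> * c)"
    unfolding K_def using \<epsilon> c(1) lo_le_hi by (intro exp_ln) auto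
  then have "repetitions_bounded q \<psi> \<omega> K"
    unfolding repetitions_bounded_iff[OF w psi_pos]
    using badly_approx_repetition_weight[OF psi_pos psi_noninc c w \<epsilon> bad_\<epsilon>] by simp
  then show ?thesis ..
qed

end

lemma psi_ratio_bound:
  fixes \<psi> :: "real \<Rightarrow> real"
  assumes psi_pos: "\<forall>x>0. \<psi> x > 0" and psi_noninc: "\<forall>x y. 0 < x \<and> x \<le> y \<longrightarrow> \<psi> y \<le> \<psi> x"
    and C: "\<forall>x>0. \<psi> ((1/2) * x) \<le> C * \<psi> x"
    and "A > 0" "A / 2 \<le> Q"
  shows "\<psi> Q / Q \<le> 2 * C * \<psi> A / A"
proof -
  have "\<psi> Q \<le> \<psi> ((1/2) * A)" using psi_noninc assms(4,5) by simp
  also have "\<dots> \<le> C * \<psi> A" using C \<open>A > 0\<close> by blast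
  finally have "\<psi> Q \<le> C * \<psi> A" .
  moreover have "Q > 0" using assms(4,5) by simp
  then have "\<psi> Q > 0" using psi_pos by blast
  ultimately have "\<psi> Q / Q \<le> C * \<psi> A / (A / 2)"
    using assms(4,5) by (intro frac_le) auto
  then show ?thesis by (simp add: field_simps)
qed

context rational_ifs
begin

text \<open>A word with bounded repetitions is not eventually periodic: a periodic tail contains
  repetitions of every length right after the preperiod.\<close>
lemma repetitions_bounded_not_eventually_periodic:
  assumes w: "\<omega> \<in> words E" and psi_pos: "\<forall>x>0. \<psi> x > 0"
    and bounded: "repetitions_bounded q \<psi> \<omega> K"
  shows "\<not> eventually_periodic \<omega>"
proof
  assume "eventually_periodic \<omega>"
  then obtain n m where "m > 0" and per: "\<forall>i\<ge>n. \<omega> (i + m) = \<omega> i"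
    by (auto simp: eventually_periodic_def)
  define A where "A = qprod q \<omega> 0 (n + m)"
  have "\<psi> A > 0" using psi_pos qprod_pos[OF w] by (simp add: A_def)
  obtain R where R: "exp K / \<psi> A < 2 ^ R" using real_arch_pow[of 2] by auto
  have "\<omega> (n + j) = \<omega> (n + m + j)" for j using per[rule_format, of "n + j"] by (simp add: add_ac)
  then have "qprod q \<omega> (n + m) R * \<psi> A \<le> exp K"
    using bounded \<open>m > 0\<close> unfolding repetitions_bounded_iff[OF w psi_pos] A_def
    by (metis add_diff_cancel_right' less_add_same_cancel1 order_refl)
  then have "2 ^ R * \<psi> A \<le> exp K"
    using qprod_ge_pow2[OF w, of R "n + m"] \<open>\<psi> A > 0\<close> by (smt (verit) mult_right_mono)
  then show False using R \<open>\<psi> A > 0\<close> by (simp add: field_simps)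
qed

text \<open>Comparison at the first difference k between \<omega> and an eventually periodic \<omega>' with
  preperiod n and period m, where A = P(\<omega>',0,n+m): either k \<le> n+m, or \<omega> repeats
  \<omega>_n..\<omega>_{k-m-1} at n + m, and the repetition bound applies.\<close>
lemma first_difference_weight:
  assumes w: "\<omega> \<in> words E" and psi_pos: "\<forall>x>0. \<psi> x > 0" and M: "\<forall>x>0. \<psi> x \<le> M"
    and bounded: "repetitions_bounded q \<psi> \<omega> K"
    and w': "\<omega>' \<in> words E" and ev: "eventually_periodic \<omega>'"
    and agree: "\<forall>i<k. \<omega> i = \<omega>' i"
  defines "A \<equiv> qprod q \<omega>' 0 (preperiod \<omega>' + min_period \<omega>')"
  shows "qprod q \<omega> 0 k * \<psi> A \<le> A * max M (exp K)"
proof -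
  define n m where "n = preperiod \<omega>'" and "m = min_period \<omega>'"
  have "m > 0" and per: "\<forall>i\<ge>n. \<omega>' (i + m) = \<omega>' i"
    using preperiod_period[OF ev] by (simp_all add: n_def m_def)
  have pos: "A > 0" "\<psi> A > 0" using qprod_pos[OF w'] psi_pos by (simp_all add: A_def)
  show ?thesis
  proof (cases "k \<le> n + m")
    case True
    have "qprod q \<omega> 0 k = qprod q \<omega>' 0 k" using agree by (intro qprod_cong) auto
    also have "\<dots> \<le> A" unfolding A_def n_def[symmetric] m_def[symmetric] by (rule qprod_mono[OF w' True])
    finally have "qprod q \<omega> 0 k * \<psi> A \<le> A * M"
      using M pos qprod_pos[OF w, of 0 k] by (intro mult_mono) auto
    then show ?thesis using pos by (smt (verit) mult_left_mono max.cobounded1)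
  next
    case False
    define R where "R = k - (n + m)"
    have k: "k = n + m + R" using False by (simp add: R_def)
    have "\<omega> (n + j) = \<omega> (n + m + j)" if "j < R" for j
    proof -
      have "\<omega> (n + j) = \<omega>' (n + j)" using agree k that by simp
      also have "\<dots> = \<omega>' (n + m + j)" using per[rule_format, of "n + j"] by (simp add: add_ac)
      also have "\<dots> = \<omega> (n + m + j)" using agree k that by simp
      finally show ?thesis .
    qed
    moreover have "qprod q \<omega> 0 (n + m) = A"
      unfolding A_def n_def[symmetric] m_def[symmetric] using agree k by (intro qprod_cong) auto
    ultimately have "qprod q \<omega> (n + m) R * \<psi> A \<le> exp K"
      using bounded \<open>m > 0\<close> unfolding repetitions_bounded_iff[OF w psi_pos] k
      by (metis add_diff_cancel_right' less_add_same_cancel1 order_refl)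
    moreover have "qprod q \<omega> 0 k = A * qprod q \<omega> (n + m) R"
      unfolding k qprod_add[of q \<omega> 0 "n + m" R] \<open>qprod q \<omega> 0 (n + m) = A\<close> by simp
    ultimately have "qprod q \<omega> 0 k * \<psi> A \<le> A * exp K"
      using pos by (simp add: mult.assoc mult_left_mono)
    then show ?thesis using pos by (smt (verit) mult_left_mono max.cobounded2)
  qed
qed

end

context separated_ifs
begin

text \<open>A rational point
  \<pi>(\<omega>') differs from x at some first letter k, and then |x - \<pi>(\<omega>')| \<ge> \<delta>/P(\<omega>,0,k), which
  the previous comparison relates to \<psi>(q_int)/q_int.\<close>
lemma repetitions_bounded_imp_badly_approx:
  assumes psi_pos: "\<forall>x>0. \<psi> x > 0" and psi_noninc: "\<forall>x y. 0 < x \<and> x \<le> y \<longrightarrow> \<psi> y \<le> \<psi> x"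
    and M: "\<forall>x>0. \<psi> x \<le> M" and C: "C > 0" "\<forall>x>0. \<psi> ((1/2) * x) \<le> C * \<psi> x"
    and w: "\<omega> \<in> words E" and bounded: "repetitions_bounded q \<psi> \<omega> K"
  shows "badly_symb_approx E p q r \<psi> (coding \<omega>)"
proof -
  obtain \<delta> where "\<delta> > 0" and gap: "\<And>\<omega> \<omega>' k. \<omega> \<in> words E \<Longrightarrow> \<omega>' \<in> words E \<Longrightarrow>
      \<forall>i<k. \<omega> i = \<omega>' i \<Longrightarrow> \<omega> k \<noteq> \<omega>' k \<Longrightarrow> \<delta> / qprod q \<omega> 0 k \<le> \<bar>coding \<omega> - coding \<omega>'\<bar>"
    by (rule coding_dist_lower) simp
  define B where "B = max M (exp K)"
  have "B > 0" by (simp add: B_def max.strict_coboundedI2)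
  define \<epsilon> where "\<epsilon> = \<delta> / (2 * C * B)"
  have "\<epsilon> * \<psi> (intrinsic_denom p q \<omega>') / intrinsic_denom p q \<omega>' \<le> \<bar>coding \<omega> - coding \<omega>'\<bar>"
    if w': "\<omega>' \<in> words E" and rat: "coding \<omega>' \<in> \<rat>" for \<omega>'
  proof -
    have ev: "eventually_periodic \<omega>'" by (rule rational_coding_eventually_periodic[OF w' rat])
    then have "\<omega> \<noteq> \<omega>'"
      using repetitions_bounded_not_eventually_periodic[OF w psi_pos bounded] by blast
    then obtain k where agree: "\<forall>i<k. \<omega> i = \<omega>' i" and "\<omega> k \<noteq> \<omega>' k" by (rule first_difference)
    define A where "A = qprod q \<omega>' 0 (preperiod \<omega>' + min_period \<omega>')"
    have pos: "A > 0" "\<psi> A > 0" "qprod q \<omega> 0 k > 0"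
      using qprod_pos[OF w'] qprod_pos[OF w] psi_pos by (simp_all add: A_def)
    have "\<psi> (intrinsic_denom p q \<omega>') / intrinsic_denom p q \<omega>' \<le> 2 * C * \<psi> A / A"
      by (rule psi_ratio_bound[OF psi_pos psi_noninc C(2) pos(1)])
        (use intrinsic_denom_bounds(1)[OF w' ev] in \<open>simp add: A_def\<close>)
    then have "\<epsilon> * (\<psi> (intrinsic_denom p q \<omega>') / intrinsic_denom p q \<omega>') \<le> \<epsilon> * (2 * C * \<psi> A / A)"
      by (rule mult_left_mono) (use \<open>\<delta> > 0\<close> C(1) \<open>B > 0\<close> in \<open>simp add: \<epsilon>_def\<close>)
    then have "\<epsilon> * \<psi> (intrinsic_denom p q \<omega>') / intrinsic_denom p q \<omega>' \<le> \<epsilon> * (2 * C * \<psi> A / A)"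
      by simp
    also have "\<dots> = \<delta> * \<psi> A / (A * B)" using C(1) \<open>B > 0\<close> by (simp add: \<epsilon>_def field_simps)
    also have "\<dots> \<le> \<delta> / qprod q \<omega> 0 k"
      using first_difference_weight[OF w psi_pos M bounded w' ev agree] pos \<open>\<delta> > 0\<close> \<open>B > 0\<close>
      by (simp add: A_def B_def field_simps mult_left_mono)
    also have "\<dots> \<le> \<bar>coding \<omega> - coding \<omega>'\<bar>" by (rule gap[OF w w' agree \<open>\<omega> k \<noteq> \<omega>' k\<close>])
    finally show ?thesis .
  qed
  moreover have "\<epsilon> > 0" using \<open>\<delta> > 0\<close> C(1) \<open>B > 0\<close> by (simp add: \<epsilon>_def)
  ultimately show ?thesis unfolding badly_symb_approx_def by blast
qed

end

theorem lemma4p3: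
  fixes E :: "'a set" and p :: "'a \<Rightarrow> int" and q :: "'a \<Rightarrow> nat" and r :: "'a \<Rightarrow> int"
    and \<psi> :: "real \<Rightarrow> real" and \<omega> :: "nat \<Rightarrow> 'a"
  assumes ifs: "rational_IFS E p q r"
    and ssc: "strong_separation E (ifs_map p q r)"
    and psi_pos: "\<forall>t>0. \<psi> t > 0"
    and psi_noninc: "\<forall>s t. 0 < s \<and> s \<le> t \<longrightarrow> \<psi> t \<le> \<psi> s"
    and psi_bdd: "\<exists>M. \<forall>t>0. \<psi> t \<le> M"
    and psi_sv: "slowly_varying \<psi>"
    and \<omega>: "\<omega> \<in> words E"
  shows "badly_symb_approx E p q r \<psi> (coding_map (ifs_map p q r) \<omega>) \<longleftrightarrow>
    (\<exists>K. \<forall>L::nat. \<forall>\<eta>::'a list.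
       (\<exists>s t. s \<noteq> t \<and> s + length \<eta> \<le> L \<and> t + length \<eta> \<le> L \<and>
              subword \<omega> s (length \<eta>) = \<eta> \<and> subword \<omega> t (length \<eta>) = \<eta>) \<longrightarrow>
       pseudolength q \<eta> \<le> K + log_psi \<psi> (pseudolength q (subword \<omega> 0 (L - length \<eta>))))"
proof -
  obtain lo hi where "lo \<le> hi" "\<forall>a\<in>E. ifs_map p q r a ` {lo..hi} \<subseteq> {lo..hi}"
    "\<forall>a\<in>E. \<forall>b\<in>E. a \<noteq> b \<longrightarrow> ifs_map p q r a ` {lo..hi} \<inter> ifs_map p q r b ` {lo..hi} = {}"
    using ssc unfolding strong_separation_def by blast
  then interpret separated_ifs E p q r lo hi
    using ifs by unfold_locales
  obtain c where c: "c > 0" "\<forall>x>0. c * \<psi> x \<le> \<psi> (2 * x)"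
    using slowly_varying_doubling[OF psi_sv] by blast
  obtain C where C: "C > 0" "\<forall>x>0. \<psi> ((1/2) * x) \<le> C * \<psi> x"
    using slowly_varying_halving[OF psi_sv] by blast
  obtain M where M: "\<forall>x>0. \<psi> x \<le> M" using psi_bdd by blast
  have "badly_symb_approx E p q r \<psi> (coding \<omega>) \<longleftrightarrow> (\<exists>K. repetitions_bounded q \<psi> \<omega> K)"
    using badly_approx_imp_repetitions_bounded[OF psi_pos psi_noninc c \<omega>]
      repetitions_bounded_imp_badly_approx[OF psi_pos psi_noninc M C \<omega>] by blast
  then show ?thesis unfolding repetitions_bounded_def .
qed

end
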